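(* For each $n\ge 0$, $\mathrm{j}_n$ is the unique endomorphism $p$ of $\mathbf n$ in $\mathcal{TL}_0(\Bbbk)$ such that: (1) $p=\mathrm{id}_{\mathbf n}+x$ with $x$ a linear combination of Temperley–Lieb diagrams $\mathbf n\to\mathbf n$ having fewer than $n$ through-strands; (2) $p\circ p=p$; (3) $\mathrm{cap}_{\{i\},n}\circ p=0=p\circ\mathrm{cup}_{\{i\},n}$ for all $i\in\{1,\dots,n-1\}$.
   Context: $\Bbbk$ is a field. $\mathcal{TL}_0(\Bbbk)$ is the strict $\Bbbk$-linear monoidal category with objects $\mathbf 0,\mathbf 1,\dots$, $\mathbf m\otimes\mathbf n=\mathbf{m+n}$, generated by $\mathrm{cup}:\mathbf 0\to\mathbf 2$ and $\mathrm{cap}:\mathbf 2\to\mathbf 0$ subject to $(\mathrm{id}_{\mathbf 1}\otimes\mathrm{cap})\circ(\mathrm{cup}\otimes\mathrm{id}_{\mathbf 1})=0=(\mathrm{cap}\otimes\mathrm{id}_{\mathbf 1})\circ(\mathrm{id}_{\mathbf 1}\otimes\mathrm{cup})$ and $\mathrm{cap}\circ\mathrm{cup}=\mathrm{id}_{\mathbf 0}$. A Temperley–Lieb diagram is a nonzero morphism built from cup, cap and identities by $\otimes$ and $\circ$; through-strands join bottom to top. A subset $I\subseteq\{1,\dots,n\}$ is apt if $n\notin I$ and no two elements of $I$ are consecutive; $\mathrm{cap}_{I,n}:\mathbf n\to\mathbf{n-2|I|}$ has caps joining strands $i,i+1$ for $i\in I$ and through-strands elsewhere, $\mathrm{cup}_{I,n}$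 is its vertical reflection (so $\mathrm{cap}_{\{i\},n}=\mathrm{id}_{\mathbf{i-1}}\otimes\mathrm{cap}\otimes\mathrm{id}_{\mathbf{n-i-1}}$), and $\mathrm{j}_n=\sum_{I\text{ apt}}(-1)^{|I|}\mathrm{cup}_{I,n}\circ\mathrm{cap}_{I,n}$. *)

theory Defs
  imports Main
begin

text \<open>Boundary points of a diagram m -> n:
  Bot i (i < m, bottom, 0-based left to right) and Top j (j < n, top, 0-based).
  A Temperley-Lieb diagram is a fixed-point-free involution on these points
  (identity elsewhere) that is noncrossing (planar).  Hom-spaces are the
  k-linear combinations of diagrams, i.e. functions from diagrams to k
  supported on the diagrams m -> n.\<close>

datatype pt = Bot nat | Top nat

type_synonym diag = "pt \<Rightarrow> pt"
type_synonym 'k mor = "diag \<Rightarrow> 'k"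

definition pts :: "nat \<Rightarrow> nat \<Rightarrow> pt set" where
  "pts m n = Bot ` {..<m} \<union> Top ` {..<n}"

text \<open>Cyclic position on the boundary: bottom left to right, then top right to left.\<close>
fun cpos :: "nat \<Rightarrow> nat \<Rightarrow> pt \<Rightarrow> nat" where
  "cpos m n (Bot i) = i"
| "cpos m n (Top j) = m + (n - 1 - j)"

definition tl_diag :: "nat \<Rightarrow> nat \<Rightarrow> diag set" where
  "tl_diag m n = {d. (\<forall>x. x \<notin> pts m n \<longrightarrow> d x = x)
      \<and> (\<forall>x\<in>pts m n. d x \<in> pts m n \<and> d x \<noteq> x \<and> d (d x) = x)
      \<and> (\<forall>x\<in>pts m n. \<forall>y\<in>pts m n.
           \<not> (cpos m n x < cpos m n y \<and> cpos m n y < cpos m n (d x)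
               \<and> cpos m n (d x) < cpos m n (d y)))}"

definition through :: "nat \<Rightarrow> diag \<Rightarrow> nat" where
  "through m d = card {i. i < m \<and> (\<exists>j. d (Bot i) = Top j)}"

text \<open>Vertical composition of diagrams d1 : m -> k (below) and d2 : k -> n (above).
  The result is None (the zero morphism) iff some component of the glued picture
  contains a zigzag, which happens iff a cup of d1 and a cap of d2 meet at a
  middle point without closing a loop.  Closed loops evaluate to 1.\<close>
definition compose :: "nat \<Rightarrow> nat \<Rightarrow> nat \<Rightarrow> diag \<Rightarrow> diag \<Rightarrow> diag option" where
  "compose m k n d2 d1 =
    (if \<exists>a<k. \<exists>b c. d1 (Top a) = Top b \<and> d2 (Bot a) = Bot c \<and> b \<noteq> c then None
     else Some (\<lambda>x. case x of
        Bot i \<Rightarrow> (if i < m then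
                   (case d1 (Bot i) of
                      Bot i' \<Rightarrow> Bot i'
                    | Top a \<Rightarrow> (case d2 (Bot a) of
                         Top j \<Rightarrow> Top j
                       | Bot b \<Rightarrow> (case d1 (Top b) of Bot i' \<Rightarrow> Bot i' | Top c \<Rightarrow> Bot i)))
                 else Bot i)
      | Top j \<Rightarrow> (if j < n then
                   (case d2 (Top j) of
                      Top j' \<Rightarrow> Top j'
                    | Bot a \<Rightarrow> (case d1 (Top a) of
                         Bot i \<Rightarrow> Bot i
                       | Top b \<Rightarrow> (case d2 (Bot b) of Top j' \<Rightarrow> Top j' | Bot c \<Rightarrow> Top j)))
                 else Top j)))"

definition comp :: "nat \<Rightarrow> nat \<Rightarrow> nat \<Rightarrow> 'k::field mor \<Rightarrow> 'k mor \<Rightarrow> 'k mor" where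
  "comp m k n g f = (\<lambda>e. \<Sum>d2\<in>tl_diag k n. \<Sum>d1\<in>tl_diag m k.
       (if compose m k n d2 d1 = Some e then g d2 * f d1 else 0))"

definition dg :: "diag \<Rightarrow> 'k::field mor" where
  "dg d = (\<lambda>e. if e = d then 1 else 0)"

definition id_diag :: "nat \<Rightarrow> diag" where
  "id_diag n = (\<lambda>x. case x of Bot i \<Rightarrow> (if i < n then Top i else Bot i)
                             | Top j \<Rightarrow> (if j < n then Bot j else Top j))"

text \<open>cap_{I,n} : n -> n - 2|I|, with I a set of 1-based strand indices:
  strand s (Bot (s-1)) is capped with s+1 if s \<in> I, with s-1 if s-1 \<in> I,
  otherwise it is a through-strand to top position (s-1) - 2 |{i\<in>I. i < s}|.\<close>
definition cap_diag :: "nat set \<Rightarrow> nat \<Rightarrow> diag" where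
  "cap_diag I n = (\<lambda>x. case x of
      Bot t \<Rightarrow> (if t < n then
                  (if t + 1 \<in> I then Bot (t + 1)
                   else if t \<in> I then Bot (t - 1)
                   else Top (t - 2 * card {i\<in>I. i \<le> t}))
                else Bot t)
    | Top j \<Rightarrow> (if j < n - 2 * card I then
                  Bot (THE t. t < n \<and> t + 1 \<notin> I \<and> t \<notin> I \<and> t - 2 * card {i\<in>I. i \<le> t} = j)
                else Top j))"

fun flip_pt :: "pt \<Rightarrow> pt" where
  "flip_pt (Bot i) = Top i"
| "flip_pt (Top j) = Bot j"

definition cup_diag :: "nat set \<Rightarrow> nat \<Rightarrow> diag" where
  "cup_diag I n = (\<lambda>x. flip_pt (cap_diag I n (flip_pt x)))"

definition apt :: "nat \<Rightarrow> nat set set" where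
  "apt n = {I. I \<subseteq> {1..n} \<and> n \<notin> I \<and> (\<forall>i\<in>I. i + 1 \<notin> I)}"

definition jn :: "nat \<Rightarrow> 'k::field mor" where
  "jn n = (\<lambda>e. \<Sum>I\<in>apt n. (-1) ^ card I *
             comp n (n - 2 * card I) n (dg (cup_diag I n)) (dg (cap_diag I n)) e)"

definition JW_props :: "nat \<Rightarrow> 'k::field mor \<Rightarrow> bool" where
  "JW_props n p \<longleftrightarrow>
     (\<exists>x::'k mor. (\<forall>e. e \<notin> {d\<in>tl_diag n n. through n d < n} \<longrightarrow> x e = 0)
        \<and> p = (\<lambda>e. dg (id_diag n) e + x e))
   \<and> comp n n n p p = p
   \<and> (\<forall>i\<in>{1..n-1}. comp n n (n - 2) (dg (cap_diag {i} n)) p = (\<lambda>_. 0)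
                   \<and> comp (n - 2) n n p (dg (cup_diag {i} n)) = (\<lambda>_. 0))"

end

(* Write e_I = cup_I o cap_I, so that j_n is the signed sum of the diagrams e_I over the apt
   sets I, with leading term e_{} = id.  A product e_J o e_I is e_{I u J} when I u J is apt and
   zero otherwise, and e_I o cup_{i} is zero or unchanged when i is added to I; in both cases the
   signed sums cancel in pairs I, I u {i}, which gives idempotence and the cap/cup conditions.
   For uniqueness, the difference r of two solutions is supported on diagrams with fewer than n
   through-strands and is killed by every cup_{i}.  A diagram d in the support of r with the most
   through-strands has a bottom cap joining neighbouring points a, a + 1; every other diagram
   with the same composite with cup_{a+1} has two more through-strands, so the coefficient of
   d o cup_{a+1} in r o cup_{a+1} = 0 is the coefficient of d in r. *)

theory Submission
  imports Defs
begin

section \<open>Diagrams\<close>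

lemma pts_simps [simp]: "Bot i \<in> pts m n \<longleftrightarrow> i < m" "Top j \<in> pts m n \<longleftrightarrow> j < n"
  unfolding pts_def by auto

lemma tl_diag_outside: "d \<in> tl_diag m n \<Longrightarrow> x \<notin> pts m n \<Longrightarrow> d x = x"
  unfolding tl_diag_def by auto

lemma tl_diag_closed: "d \<in> tl_diag m n \<Longrightarrow> x \<in> pts m n \<Longrightarrow> d x \<in> pts m n"
  unfolding tl_diag_def by auto

lemma tl_diag_no_fixpoint: "d \<in> tl_diag m n \<Longrightarrow> x \<in> pts m n \<Longrightarrow> d x \<noteq> x"
  unfolding tl_diag_def by auto

lemma tl_diag_involution: "d \<in> tl_diag m n \<Longrightarrow> d (d x) = x"
  unfolding tl_diag_def by (cases "x \<in> pts m n") auto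

lemma tl_diag_noncrossing:
  "d \<in> tl_diag m n \<Longrightarrow> x \<in> pts m n \<Longrightarrow> y \<in> pts m n \<Longrightarrow>
    \<not> (cpos m n x < cpos m n y \<and> cpos m n y < cpos m n (d x) \<and> cpos m n (d x) < cpos m n (d y))"
  unfolding tl_diag_def by blast

lemma finite_tl_diag: "finite (tl_diag m n)"
proof -
  let ?restrict = "\<lambda>d x. if x \<in> pts m n then d x else Bot 0"
  let ?F = "{f. \<forall>x. (x \<in> pts m n \<longrightarrow> f x \<in> pts m n) \<and> (x \<notin> pts m n \<longrightarrow> f x = Bot 0)}"
  have "inj_on ?restrict (tl_diag m n)"
  proof (rule inj_onI, rule ext)
    fix d d' x assume "d \<in> tl_diag m n" "d' \<in> tl_diag m n" "?restrict d = ?restrict d'"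
    then show "d x = d' x"
      using fun_cong[of "?restrict d" "?restrict d'" x] tl_diag_outside[of d m n x]
        tl_diag_outside[of d' m n x]
      by (cases "x \<in> pts m n") simp_all
  qed
  moreover have "?restrict ` tl_diag m n \<subseteq> ?F"
    using tl_diag_closed by auto
  moreover have "finite (pts m n)"
    by (simp add: pts_def)
  then have "finite ?F"
    by (intro finite_set_of_finite_funs)
  ultimately show ?thesis
    using finite_subset finite_imageD by blast
qed

text \<open>Chords joining points adjacent in the cyclic order cannot cross anything, and
  through-strands cannot cross each other as long as they keep the left-to-right order.\<close>

lemma tl_diagI:
  assumes outside: "\<And>x. x \<notin> pts m n \<Longrightarrow> d x = x"
    and chords: "\<And>x. x \<in> pts m n \<Longrightarrow> d x \<in> pts m n \<and> d x \<noteq> x \<and> d (d x) = x \<and>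
        (cpos m n (d x) = Suc (cpos m n x) \<or> cpos m n x = Suc (cpos m n (d x))
         \<or> (\<exists>i j. x = Bot i \<and> d x = Top j) \<or> (\<exists>i j. x = Top j \<and> d x = Bot i))"
    and order: "\<And>i i' j j'. d (Bot i) = Top j \<Longrightarrow> d (Bot i') = Top j' \<Longrightarrow> i < m \<Longrightarrow> i' < m \<Longrightarrow>
        i < i' \<Longrightarrow> j < j'"
  shows "d \<in> tl_diag m n"
proof -
  let ?c = "cpos m n"
  have spanning: "\<exists>i j. u = Bot i \<and> d u = Top j"
    if u: "u \<in> pts m n" and between: "?c u < ?c w" "?c w < ?c (d u)" for u w
  proof -
    have "d u \<in> pts m n"
      using chords[OF u] by blast
    then have "u = Top j \<Longrightarrow> d u = Bot i \<Longrightarrow> False" for i j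
      using u between by simp
    moreover have "?c (d u) \<noteq> Suc (?c u)" "?c u \<noteq> Suc (?c (d u))"
      using between by linarith+
    ultimately show ?thesis
      using chords[OF u] by blast
  qed
  have noncrossing: "\<not> (?c x < ?c y \<and> ?c y < ?c (d x) \<and> ?c (d x) < ?c (d y))"
    if x: "x \<in> pts m n" and y: "y \<in> pts m n" for x y
  proof
    assume cross: "?c x < ?c y \<and> ?c y < ?c (d x) \<and> ?c (d x) < ?c (d y)"
    obtain i j where xi: "x = Bot i" and dx: "d x = Top j"
      using spanning[OF x, of y] cross by blast
    obtain i' j' where yi: "y = Bot i'" and dy: "d y = Top j'"
      using spanning[OF y, of "d x"] cross by blast
    have "i < m" "i' < m" "i < i'"
      using x y cross unfolding xi yi by simp_all
    then have "j < j'"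
      using order[of i j i' j'] dx dy unfolding xi yi by simp
    moreover have "j < n" "j' < n"
      using chords[OF x] chords[OF y] unfolding dx dy by simp_all
    ultimately show False
      using cross unfolding dx dy by (simp, linarith)
  qed
  show ?thesis
    unfolding tl_diag_def using outside chords noncrossing by simp
qed

definition zigzag :: "nat \<Rightarrow> diag \<Rightarrow> diag \<Rightarrow> bool" where
  "zigzag k d2 d1 \<longleftrightarrow> (\<exists>a<k. \<exists>b c. d1 (Top a) = Top b \<and> d2 (Bot a) = Bot c \<and> b \<noteq> c)"

definition glue :: "nat \<Rightarrow> nat \<Rightarrow> diag \<Rightarrow> diag \<Rightarrow> diag" where
  "glue m n d2 d1 = (\<lambda>x. case x of
        Bot i \<Rightarrow> (if i < m then
                   (case d1 (Bot i) of
                      Bot i' \<Rightarrow> Bot i'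
                    | Top a \<Rightarrow> (case d2 (Bot a) of
                         Top j \<Rightarrow> Top j
                       | Bot b \<Rightarrow> (case d1 (Top b) of Bot i' \<Rightarrow> Bot i' | Top c \<Rightarrow> Bot i)))
                 else Bot i)
      | Top j \<Rightarrow> (if j < n then
                   (case d2 (Top j) of
                      Top j' \<Rightarrow> Top j'
                    | Bot a \<Rightarrow> (case d1 (Top a) of
                         Bot i \<Rightarrow> Bot i
                       | Top b \<Rightarrow> (case d2 (Bot b) of Top j' \<Rightarrow> Top j' | Bot c \<Rightarrow> Top j)))
                 else Top j))"

lemma compose_eq:
  "compose m k n d2 d1 = (if zigzag k d2 d1 then None else Some (glue m n d2 d1))"
  unfolding compose_def glue_def zigzag_def by simp

section \<open>Composition of morphisms\<close>

lemma comp_dg_right: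
  assumes "b \<in> tl_diag m k"
  shows "comp m k n g (dg b) e = (\<Sum>d\<in>tl_diag k n. if compose m k n d b = Some e then g d else 0)"
proof -
  have "(\<Sum>d1\<in>tl_diag m k. if compose m k n d d1 = Some e then g d * dg b d1 else 0)
      = (\<Sum>d1\<in>tl_diag m k. if d1 = b then if compose m k n d b = Some e then g d else 0 else 0)" for d
    by (intro sum.cong) (auto simp: dg_def)
  then show ?thesis
    unfolding comp_def using assms by (simp add: finite_tl_diag)
qed

lemma comp_dg_dg:
  assumes "a \<in> tl_diag k n" "b \<in> tl_diag m k"
  shows "comp m k n (dg a) (dg b) = (case compose m k n a b of None \<Rightarrow> (\<lambda>_. 0) | Some e \<Rightarrow> dg e)"
proof
  fix e
  have "comp m k n (dg a) (dg b) e
      = (\<Sum>d\<in>tl_diag k n. if d = a then if compose m k n a b = Some e then 1 else 0 else 0)"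
    unfolding comp_dg_right[OF assms(2)] by (intro sum.cong) (auto simp: dg_def)
  then show "comp m k n (dg a) (dg b) e = (case compose m k n a b of None \<Rightarrow> (\<lambda>_. 0) | Some e \<Rightarrow> dg e) e"
    using assms by (auto simp: finite_tl_diag dg_def split: option.split)
qed

lemma comp_altdef:
  "comp m k n g f e =
    (\<Sum>d2\<in>tl_diag k n. \<Sum>d1\<in>tl_diag m k. (if compose m k n d2 d1 = Some e then 1 else 0) * (g d2 * f d1))"
  unfolding comp_def by (intro sum.cong refl) simp

lemma comp_sum_left:
  assumes "finite A"
  shows "comp m k n (\<lambda>e. \<Sum>I\<in>A. w I * g I e) f e' = (\<Sum>I\<in>A. w I * comp m k n (g I) f e')"
proof -
  let ?c = "\<lambda>d2 d1. if compose m k n d2 d1 = Some e' then 1 else 0"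
  have "comp m k n (\<lambda>e. \<Sum>I\<in>A. w I * g I e) f e'
      = (\<Sum>d2\<in>tl_diag k n. \<Sum>d1\<in>tl_diag m k. \<Sum>I\<in>A. w I * (?c d2 d1 * (g I d2 * f d1)))"
    unfolding comp_altdef by (simp add: sum_distrib_left sum_distrib_right mult_ac)
  also have "\<dots> = (\<Sum>I\<in>A. \<Sum>d2\<in>tl_diag k n. \<Sum>d1\<in>tl_diag m k. w I * (?c d2 d1 * (g I d2 * f d1)))"
    by (subst sum.swap) (simp add: sum.swap[of _ A])
  also have "\<dots> = (\<Sum>I\<in>A. w I * comp m k n (g I) f e')"
    unfolding comp_altdef by (simp add: sum_distrib_left)
  finally show ?thesis .
qed

lemma comp_sum_right:
  assumes "finite A"
  shows "comp m k n f (\<lambda>e. \<Sum>I\<in>A. w I * g I e) e' = (\<Sum>I\<in>A. w I * comp m k n f (g I) e')"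
proof -
  let ?c = "\<lambda>d2 d1. if compose m k n d2 d1 = Some e' then 1 else 0"
  have "comp m k n f (\<lambda>e. \<Sum>I\<in>A. w I * g I e) e'
      = (\<Sum>d2\<in>tl_diag k n. \<Sum>d1\<in>tl_diag m k. \<Sum>I\<in>A. w I * (?c d2 d1 * (f d2 * g I d1)))"
    unfolding comp_altdef by (simp add: sum_distrib_left sum_distrib_right mult_ac)
  also have "\<dots> = (\<Sum>I\<in>A. \<Sum>d2\<in>tl_diag k n. \<Sum>d1\<in>tl_diag m k. w I * (?c d2 d1 * (f d2 * g I d1)))"
    by (subst sum.swap) (simp add: sum.swap[of _ A])
  also have "\<dots> = (\<Sum>I\<in>A. w I * comp m k n f (g I) e')"
    unfolding comp_altdef by (simp add: sum_distrib_left)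
  finally show ?thesis .
qed

lemma comp_diff_left: "comp m k n (\<lambda>e. g e - h e) f e' = comp m k n g f e' - comp m k n h f e'"
  unfolding comp_altdef by (simp add: algebra_simps sum_subtractf)

section \<open>Signed sums over apt sets\<close>

lemma sum_sign_toggle_eq_0:
  fixes G :: "'a set \<Rightarrow> 'b::comm_ring_1"
  assumes "finite A" and finite_members: "\<And>I. I \<in> A \<Longrightarrow> finite I"
    and remove: "\<And>I. I \<in> A \<Longrightarrow> j \<in> I \<Longrightarrow> I - {j} \<in> A"
    and same: "\<And>I. I \<in> A \<Longrightarrow> j \<notin> I \<Longrightarrow> insert j I \<in> A \<Longrightarrow> G (insert j I) = G I"
    and zero: "\<And>I. I \<in> A \<Longrightarrow> j \<notin> I \<Longrightarrow> insert j I \<notin> A \<Longrightarrow> G I = 0"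
  shows "(\<Sum>I\<in>A. (-1) ^ card I * G I) = 0"
proof -
  define f where "f I = (-1) ^ card I * G I" for I
  define Containing where "Containing = {I\<in>A. j \<in> I}"
  define Extendable where "Extendable = {I\<in>A. j \<notin> I \<and> insert j I \<in> A}"
  define Blocked where "Blocked = {I\<in>A. j \<notin> I \<and> insert j I \<notin> A}"
  have split: "A = Containing \<union> Extendable \<union> Blocked"
    unfolding Containing_def Extendable_def Blocked_def by auto
  have finite: "finite Containing" "finite Extendable" "finite Blocked"
    using \<open>finite A\<close> unfolding Containing_def Extendable_def Blocked_def by auto
  have "sum f A = sum f (Containing \<union> Extendable) + sum f Blocked"
    unfolding split using finite by (intro sum.union_disjoint) (auto simp: Containing_def Extendable_def Blocked_def)
  also have "sum f (Containing \<union> Extendable) = sum f Containing + sum f Extendable"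
    using finite by (intro sum.union_disjoint) (auto simp: Containing_def Extendable_def)
  also have "sum f Blocked = 0"
    unfolding f_def Blocked_def using zero by (intro sum.neutral) auto
  also have "Containing = insert j ` Extendable"
  proof (intro equalityI subsetI)
    fix I assume "I \<in> Containing"
    then have "I - {j} \<in> Extendable" "I = insert j (I - {j})"
      unfolding Containing_def Extendable_def using remove[of I] by (auto simp: insert_absorb)
    then show "I \<in> insert j ` Extendable"
      by blast
  qed (auto simp: Containing_def Extendable_def)
  also have "sum f (insert j ` Extendable) = sum (\<lambda>I. - f I) Extendable"
  proof (rule sum.reindex_cong)
    show "inj_on (insert j) Extendable"
      unfolding Extendable_def by (rule inj_onI) (metis Diff_insert_absorb mem_Collect_eq)
    fix I assume "I \<in> Extendable"
    then show "f (insert j I) = - f I"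
      unfolding f_def Extendable_def using same finite_members by auto
  qed simp
  finally show ?thesis
    unfolding f_def by (simp add: sum_negf)
qed

lemma apt_memD:
  assumes "I \<in> apt n" "i \<in> I"
  shows "0 < i \<and> i < n \<and> Suc i \<notin> I"
proof -
  have "i \<in> {1..n}" "n \<notin> I" "i + 1 \<notin> I"
    using assms unfolding apt_def by auto
  then show ?thesis
    using assms(2) by (cases "i = n") auto
qed

lemma apt_finite: "I \<in> apt n \<Longrightarrow> finite I"
  unfolding apt_def by (auto intro: finite_subset)

lemma apt_subset: "I \<in> apt n \<Longrightarrow> J \<subseteq> I \<Longrightarrow> J \<in> apt n"
  unfolding apt_def by auto

lemma finite_apt: "finite (apt n)"
  by (rule finite_subset[of _ "Pow {1..n}"]) (auto simp: apt_def)

lemma empty_apt: "{} \<in> apt n"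
  unfolding apt_def by simp

lemma insert_apt_iff:
  assumes "I \<in> apt n" "0 < i" "i < n"
  shows "insert i I \<in> apt n \<longleftrightarrow> i - 1 \<notin> I \<and> Suc i \<notin> I"
proof
  assume "insert i I \<in> apt n"
  then show "i - 1 \<notin> I \<and> Suc i \<notin> I"
    using apt_memD[of "insert i I" n "i - 1"] apt_memD[of "insert i I" n i] \<open>0 < i\<close> by auto
next
  assume neighbours: "i - 1 \<notin> I \<and> Suc i \<notin> I"
  moreover have "x + 1 \<noteq> i" if "x \<in> I" for x
    using that neighbours by auto
  ultimately show "insert i I \<in> apt n"
    using assms apt_memD[OF assms(1)] unfolding apt_def by auto
qed

lemma sum_apt_toggle_eq_0:
  fixes G :: "nat set \<Rightarrow> 'b::comm_ring_1"
  assumes "\<And>I. I \<in> apt n \<Longrightarrow> j \<notin> I \<Longrightarrow> insert j I \<in> apt n \<Longrightarrow> G (insert j I) = G I"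
    and "\<And>I. I \<in> apt n \<Longrightarrow> j \<notin> I \<Longrightarrow> insert j I \<notin> apt n \<Longrightarrow> G I = 0"
  shows "(\<Sum>I\<in>apt n. (-1) ^ card I * G I) = 0"
  using assms by (intro sum_sign_toggle_eq_0 finite_apt) (auto intro: apt_finite apt_subset)

section \<open>The diagrams \<open>cap\<^sub>I\<close>, \<open>cup\<^sub>I\<close> and \<open>cup\<^sub>I \<circ> cap\<^sub>I\<close>\<close>

text \<open>Strands are 0-based points here, while the elements of an apt set are 1-based strand
  indices: \<open>i \<in> I\<close> caps the points \<open>i - 1\<close> and \<open>i\<close>.\<close>

definition paired :: "nat set \<Rightarrow> nat \<Rightarrow> bool" where
  "paired I t \<longleftrightarrow> Suc t \<in> I \<or> t \<in> I"

definition strand_pos :: "nat set \<Rightarrow> nat \<Rightarrow> nat" where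
  "strand_pos I t = t - 2 * card {i\<in>I. i \<le> t}"

lemma card_paired_below:
  assumes I: "I \<in> apt n" and t: "\<not> paired I t"
  shows "card {s. s < t \<and> paired I s} = 2 * card {i\<in>I. i \<le> t}"
proof -
  let ?J = "{i\<in>I. i \<le> t}"
  have pos: "0 < i" if "i \<in> ?J" for i
    using that apt_memD[OF I] by blast
  have "{s. s < t \<and> paired I s} = ?J \<union> (\<lambda>i. i - 1) ` ?J"
  proof (intro equalityI subsetI)
    fix s assume "s \<in> {s. s < t \<and> paired I s}"
    then show "s \<in> ?J \<union> (\<lambda>i. i - 1) ` ?J"
      unfolding paired_def by (auto intro: image_eqI[of _ _ "Suc s"])
  next
    fix s assume "s \<in> ?J \<union> (\<lambda>i. i - 1) ` ?J"
    then show "s \<in> {s. s < t \<and> paired I s}"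
      using t pos unfolding paired_def by (auto simp: order_le_less)
  qed
  moreover have "?J \<inter> (\<lambda>i. i - 1) ` ?J = {}"
  proof -
    have "Suc (i - 1) \<notin> I" if "i - 1 \<in> I" "i \<in> ?J" for i
      using that apt_memD[OF I] by blast
    then show ?thesis
      using pos by (auto simp: Suc_pred')
  qed
  moreover have "inj_on (\<lambda>i. i - 1) ?J"
  proof (rule inj_onI)
    fix x y assume "x \<in> ?J" "y \<in> ?J" "x - 1 = y - 1"
    then show "x = y"
      using pos[of x] pos[of y] by linarith
  qed
  moreover have "finite ?J"
    using apt_finite[OF I] by simp
  ultimately show ?thesis
    by (simp add: card_Un_disjoint card_image)
qed

lemma strand_pos_eq_card:
  assumes I: "I \<in> apt n" and t: "\<not> paired I t"
  shows "strand_pos I t = card {s. s < t \<and> \<not> paired I s}"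
proof -
  have "t = card ({s. s < t \<and> \<not> paired I s} \<union> {s. s < t \<and> paired I s})"
    by (simp add: Un_def conj_disj_distribL[symmetric] lessThan_def[symmetric])
  also have "\<dots> = card {s. s < t \<and> \<not> paired I s} + card {s. s < t \<and> paired I s}"
    by (rule card_Un_disjoint) auto
  finally show ?thesis
    unfolding strand_pos_def card_paired_below[OF I t] by simp
qed

lemma card_unpaired:
  assumes I: "I \<in> apt n"
  shows "card {s. s < n \<and> \<not> paired I s} = n - 2 * card I"
proof -
  have unpaired: "\<not> paired I n"
    using apt_memD[OF I, of n] apt_memD[OF I, of "Suc n"] unfolding paired_def by auto
  have "i \<le> n" if "i \<in> I" for i
    using apt_memD[OF I that] by linarith
  then have "{i\<in>I. i \<le> n} = I"
    by blast
  then show ?thesis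
    using strand_pos_eq_card[OF I unpaired] unfolding strand_pos_def by simp
qed

lemma strand_pos_strict_mono:
  assumes I: "I \<in> apt n" and "\<not> paired I t" "\<not> paired I t'" "t < t'"
  shows "strand_pos I t < strand_pos I t'"
proof -
  have "{s. s < t \<and> \<not> paired I s} \<subset> {s. s < t' \<and> \<not> paired I s}"
    using assms by auto
  then show ?thesis
    using assms by (simp add: strand_pos_eq_card[OF I] psubset_card_mono)
qed

lemma strand_pos_inj:
  assumes "I \<in> apt n" "\<not> paired I t" "\<not> paired I t'" "strand_pos I t = strand_pos I t'"
  shows "t = t'"
  using strand_pos_strict_mono[of I n t t'] strand_pos_strict_mono[of I n t' t] assms
  by (cases t t' rule: linorder_cases) auto

lemma strand_pos_less:
  assumes I: "I \<in> apt n" and "t < n" "\<not> paired I t"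
  shows "strand_pos I t < n - 2 * card I"
proof -
  have "{s. s < t \<and> \<not> paired I s} \<subset> {s. s < n \<and> \<not> paired I s}"
    using assms by auto
  then show ?thesis
    using assms by (simp add: strand_pos_eq_card[OF I] card_unpaired[OF I, symmetric] psubset_card_mono)
qed

lemma strand_pos_surj:
  assumes I: "I \<in> apt n" and j: "j < n - 2 * card I"
  obtains t where "t < n" "\<not> paired I t" "strand_pos I t = j"
proof -
  let ?U = "{s. s < n \<and> \<not> paired I s}"
  have "inj_on (strand_pos I) ?U"
    using strand_pos_inj[OF I] by (intro inj_onI) auto
  then have "card (strand_pos I ` ?U) = n - 2 * card I"
    by (simp add: card_image card_unpaired[OF I])
  moreover have "strand_pos I ` ?U \<subseteq> {..<n - 2 * card I}"
    using strand_pos_less[OF I] by auto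
  ultimately have "strand_pos I ` ?U = {..<n - 2 * card I}"
    by (intro card_subset_eq) auto
  with j have "j \<in> strand_pos I ` ?U"
    by simp
  with that show ?thesis
    by blast
qed

lemma cap_Bot:
  "t < n \<Longrightarrow> cap_diag I n (Bot t) =
     (if Suc t \<in> I then Bot (Suc t) else if t \<in> I then Bot (t - 1) else Top (strand_pos I t))"
  unfolding cap_diag_def strand_pos_def by simp

lemma cap_Bot_unpaired: "t < n \<Longrightarrow> \<not> paired I t \<Longrightarrow> cap_diag I n (Bot t) = Top (strand_pos I t)"
  by (simp add: cap_Bot paired_def)

lemma cap_Top_strand_pos:
  assumes I: "I \<in> apt n" and "t < n" "\<not> paired I t"
  shows "cap_diag I n (Top (strand_pos I t)) = Bot t"
proof -
  have "(THE s. s < n \<and> s + 1 \<notin> I \<and> s \<notin> I \<and> s - 2 * card {i\<in>I. i \<le> s} = strand_pos I t) = t"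
    using assms strand_pos_inj[OF I _ \<open>\<not> paired I t\<close>]
    by (intro the_equality) (auto simp: paired_def strand_pos_def)
  then show ?thesis
    using strand_pos_less[OF assms] unfolding cap_diag_def by simp
qed

lemma cap_Top:
  assumes I: "I \<in> apt n" and j: "j < n - 2 * card I"
  obtains t where "t < n" "\<not> paired I t" "strand_pos I t = j" "cap_diag I n (Top j) = Bot t"
  using strand_pos_surj[OF I j] cap_Top_strand_pos[OF I] by metis

lemma cap_diag_outside: "x \<notin> pts n (n - 2 * card I) \<Longrightarrow> cap_diag I n x = x"
  by (cases x) (simp_all add: cap_diag_def)

lemma cap_diag_tl:
  assumes I: "I \<in> apt n"
  shows "cap_diag I n \<in> tl_diag n (n - 2 * card I)"
proof (rule tl_diagI, goal_cases)
  case (1 x)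
  then show ?case
    by (rule cap_diag_outside)
next
  case (2 x)
  show ?case
  proof (cases x)
    case (Bot t)
    then have t: "t < n"
      using 2 by simp
    consider "Suc t \<in> I" | "t \<in> I" | "\<not> paired I t"
      unfolding paired_def by blast
    then show ?thesis
    proof cases
      case 1
      then have "Suc t < n" "Suc (Suc t) \<notin> I"
        using apt_memD[OF I 1] by simp_all
      with 1 show ?thesis
        using Bot t by (simp add: cap_Bot)
    next
      case 2
      then have "0 < t" "Suc t \<notin> I"
        using apt_memD[OF I 2] by simp_all
      with 2 show ?thesis
        using Bot t by (auto simp: cap_Bot)
    next
      case 3
      then show ?thesis
        using Bot t strand_pos_less[OF I t 3] cap_Top_strand_pos[OF I t 3]
        by (simp add: cap_Bot_unpaired)
    qed
  next
    case (Top j)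
    then have "j < n - 2 * card I"
      using 2 by simp
    then obtain t where "t < n" "\<not> paired I t" "strand_pos I t = j" "cap_diag I n (Top j) = Bot t"
      by (rule cap_Top[OF I])
    then show ?thesis
      using Top by (simp add: cap_Bot_unpaired)
  qed
next
  case (3 i i' j j')
  then show ?case
    using strand_pos_strict_mono[OF I, of i i'] by (auto simp: cap_Bot paired_def split: if_splits)
qed

lemma flip_pt_flip_pt [simp]: "flip_pt (flip_pt x) = x"
  by (cases x) auto

lemma flip_pt_in_pts: "flip_pt x \<in> pts n m \<longleftrightarrow> x \<in> pts m n"
  by (cases x) auto

lemma cpos_flip_pt: "x \<in> pts m n \<Longrightarrow> cpos n m (flip_pt x) = (m + n - 1) - cpos m n x"
  by (cases x) auto

lemma cpos_less: "x \<in> pts m n \<Longrightarrow> cpos m n x < m + n"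
  by (cases x) auto

lemma flip_tl_diag:
  assumes d: "d \<in> tl_diag m n"
  shows "(\<lambda>x. flip_pt (d (flip_pt x))) \<in> tl_diag n m"
proof -
  let ?d = "\<lambda>x. flip_pt (d (flip_pt x))"
  have outside: "?d x = x" if "x \<notin> pts n m" for x
    using tl_diag_outside[OF d, of "flip_pt x"] that flip_pt_in_pts[of x m n] by auto
  have involution: "?d x \<in> pts n m \<and> ?d x \<noteq> x \<and> ?d (?d x) = x" if "x \<in> pts n m" for x
    using that tl_diag_closed[OF d] tl_diag_no_fixpoint[OF d] tl_diag_involution[OF d]
    by (metis flip_pt_flip_pt flip_pt_in_pts)
  have noncrossing: "\<not> (cpos n m x < cpos n m y \<and> cpos n m y < cpos n m (?d x) \<and> cpos n m (?d x) < cpos n m (?d y))"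
    if x: "x \<in> pts n m" and y: "y \<in> pts n m" for x y
  proof
    assume cross: "cpos n m x < cpos n m y \<and> cpos n m y < cpos n m (?d x) \<and> cpos n m (?d x) < cpos n m (?d y)"
    define X Y where "X = flip_pt x" and "Y = flip_pt y"
    have X: "X \<in> pts m n" and Y: "Y \<in> pts m n"
      unfolding X_def Y_def using x y flip_pt_in_pts by (metis flip_pt_flip_pt)+
    have dX: "d X \<in> pts m n" and dY: "d Y \<in> pts m n"
      using tl_diag_closed[OF d] X Y by blast+
    have "cpos m n (d Y) < cpos m n (d X) \<and> cpos m n (d X) < cpos m n Y \<and> cpos m n Y < cpos m n X"
      using cross cpos_less[OF X] cpos_less[OF Y] cpos_less[OF dX] cpos_less[OF dY]
        cpos_flip_pt[OF X] cpos_flip_pt[OF Y] cpos_flip_pt[OF dX] cpos_flip_pt[OF dY]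
      unfolding X_def Y_def by simp linarith
    then show False
      using tl_diag_noncrossing[OF d dY dX] tl_diag_involution[OF d] by simp
  qed
  show ?thesis
    unfolding tl_diag_def using outside involution noncrossing by blast
qed

lemma cup_diag_tl:
  assumes "I \<in> apt n"
  shows "cup_diag I n \<in> tl_diag (n - 2 * card I) n"
  unfolding cup_diag_def by (rule flip_tl_diag[OF cap_diag_tl[OF assms]])

lemma singleton_apt: "i \<in> {1..n-1} \<Longrightarrow> {i} \<in> apt n"
  unfolding apt_def by auto

lemma cap_single_tl: "i \<in> {1..n-1} \<Longrightarrow> cap_diag {i} n \<in> tl_diag n (n - 2)"
  using cap_diag_tl[OF singleton_apt] by fastforce

lemma cup_single_tl: "i \<in> {1..n-1} \<Longrightarrow> cup_diag {i} n \<in> tl_diag (n - 2) n"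
  using cup_diag_tl[OF singleton_apt] by fastforce

definition cupcap_diag :: "nat set \<Rightarrow> nat \<Rightarrow> diag" where
  "cupcap_diag I n = (\<lambda>x. case x of
      Bot t \<Rightarrow> if t < n then (if Suc t \<in> I then Bot (Suc t) else if t \<in> I then Bot (t - 1) else Top t) else Bot t
    | Top j \<Rightarrow> if j < n then (if Suc j \<in> I then Top (Suc j) else if j \<in> I then Top (j - 1) else Bot j) else Top j)"

lemma cupcap_Bot:
  "cupcap_diag I n (Bot t) =
    (if t < n then (if Suc t \<in> I then Bot (Suc t) else if t \<in> I then Bot (t - 1) else Top t) else Bot t)"
  unfolding cupcap_diag_def by simp

lemma cupcap_Top:
  "cupcap_diag I n (Top j) =
    (if j < n then (if Suc j \<in> I then Top (Suc j) else if j \<in> I then Top (j - 1) else Bot j) else Top j)"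
  unfolding cupcap_diag_def by simp

lemma cupcap_empty: "cupcap_diag {} n = id_diag n"
  by (rule ext) (simp add: cupcap_diag_def id_diag_def split: pt.split)

lemma cupcap_diag_tl:
  assumes I: "I \<in> apt n"
  shows "cupcap_diag I n \<in> tl_diag n n"
proof (rule tl_diagI, goal_cases)
  case (1 x)
  then show ?case
    by (cases x) (simp_all add: cupcap_Bot cupcap_Top)
next
  case (2 x)
  then obtain t where t: "t < n" and x: "x = Bot t \<or> x = Top t"
    by (cases x) auto
  consider "Suc t \<in> I" | "t \<in> I" | "\<not> paired I t"
    unfolding paired_def by blast
  then show ?case
  proof cases
    case 1
    then have "Suc t < n" "Suc (Suc t) \<notin> I"
      using apt_memD[OF I 1] by simp_all
    with 1 t x show ?thesis
      by (auto simp: cupcap_Bot cupcap_Top)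
  next
    case 2
    then have "0 < t" "Suc t \<notin> I"
      using apt_memD[OF I 2] by simp_all
    with 2 t x show ?thesis
      by (auto simp: cupcap_Bot cupcap_Top)
  next
    case 3
    with t x show ?thesis
      by (auto simp: cupcap_Bot cupcap_Top paired_def)
  qed
next
  case (3 i i' j j')
  then show ?case
    by (auto simp: cupcap_Bot split: if_splits)
qed

definition is_Top :: "pt \<Rightarrow> bool" where
  "is_Top x \<longleftrightarrow> (\<exists>j. x = Top j)"

lemma is_Top_simps [simp]: "is_Top (Top j)" "\<not> is_Top (Bot i)"
  unfolding is_Top_def by auto

lemma through_is_Top: "through m d = card {i. i < m \<and> is_Top (d (Bot i))}"
  unfolding through_def is_Top_def by simp

lemma through_cupcap:
  assumes "I \<in> apt n"
  shows "through n (cupcap_diag I n) = n - 2 * card I"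
proof -
  have "{i. i < n \<and> is_Top (cupcap_diag I n (Bot i))} = {t. t < n \<and> \<not> paired I t}"
    by (auto simp: cupcap_Bot paired_def)
  then show ?thesis
    unfolding through_is_Top using card_unpaired[OF assms] by simp
qed

definition lower_diags :: "nat \<Rightarrow> diag set" where
  "lower_diags n = {d\<in>tl_diag n n. through n d < n}"

lemma cupcap_lower:
  assumes I: "I \<in> apt n" and nonempty: "I \<noteq> {}"
  shows "cupcap_diag I n \<in> lower_diags n"
proof -
  obtain i where "i \<in> I"
    using nonempty by blast
  then have "0 < n"
    using apt_memD[OF I] by fastforce
  moreover have "card I > 0"
    using nonempty apt_finite[OF I] by (simp add: card_gt_0_iff)
  ultimately show ?thesis
    unfolding lower_diags_def using cupcap_diag_tl[OF I] through_cupcap[OF I] by simp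
qed

lemma compose_cup_cap:
  assumes I: "I \<in> apt n"
  shows "compose n (n - 2 * card I) n (cup_diag I n) (cap_diag I n) = Some (cupcap_diag I n)"
proof -
  have "\<not> zigzag (n - 2 * card I) (cup_diag I n) (cap_diag I n)"
    unfolding zigzag_def by (metis cap_Top[OF I] pt.distinct(1))
  moreover have "glue n n (cup_diag I n) (cap_diag I n) x = cupcap_diag I n x" for x
  proof -
    obtain t where "x = Bot t \<or> x = Top t"
      by (cases x) auto
    consider "\<not> t < n" | "t < n" "paired I t" | "t < n" "\<not> paired I t"
      by blast
    then show ?thesis
    proof cases
      case 3
      with \<open>x = Bot t \<or> x = Top t\<close> show ?thesis
        using strand_pos_less[OF I 3] cap_Top_strand_pos[OF I 3]
        by (auto simp: glue_def cup_diag_def cap_Bot_unpaired cupcap_Bot cupcap_Top paired_def)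
    qed (use \<open>x = Bot t \<or> x = Top t\<close> in
        \<open>auto simp: glue_def cup_diag_def cap_Bot cupcap_Bot cupcap_Top paired_def\<close>)
  qed
  ultimately show ?thesis
    unfolding compose_eq by auto
qed

text \<open>The single cap \<open>cap_diag {Suc a} n\<close> joins the points \<open>a\<close> and \<open>a + 1\<close>; its through-strands
  relabel the remaining points by \<open>unskip a\<close> (bottom to top) and \<open>skip a\<close> (top to bottom).\<close>

definition skip :: "nat \<Rightarrow> nat \<Rightarrow> nat" where
  "skip a s = (if s < a then s else s + 2)"

definition unskip :: "nat \<Rightarrow> nat \<Rightarrow> nat" where
  "unskip a t = (if t < a then t else t - 2)"

lemma skip_unskip: "t \<noteq> a \<Longrightarrow> t \<noteq> Suc a \<Longrightarrow> skip a (unskip a t) = t"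
  unfolding skip_def unskip_def by auto

lemma unskip_skip: "unskip a (skip a s) = s"
  unfolding skip_def unskip_def by auto

lemma skip_neq: "skip a s \<noteq> a" "skip a s \<noteq> Suc a"
  unfolding skip_def by auto

lemma skip_less: "s < n - 2 \<Longrightarrow> skip a s < n"
  unfolding skip_def by auto

lemma unskip_less: "Suc a < n \<Longrightarrow> t < n \<Longrightarrow> t \<noteq> a \<Longrightarrow> t \<noteq> Suc a \<Longrightarrow> unskip a t < n - 2"
  unfolding unskip_def by auto

lemma card_single_le: "card {i \<in> {Suc a}. i \<le> t} = (if Suc a \<le> t then 1 else 0)"
  by (auto simp: Collect_conv_if)

lemma cap_single_Bot:
  "cap_diag {Suc a} n (Bot t) =
    (if t < n then (if t = a then Bot (Suc a) else if t = Suc a then Bot a else Top (unskip a t)) else Bot t)"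
  unfolding cap_diag_def unskip_def card_single_le by auto

lemma cap_single_Top:
  assumes "Suc a < n"
  shows "cap_diag {Suc a} n (Top j) = (if j < n - 2 then Bot (skip a j) else Top j)"
proof -
  have "(THE t. t < n \<and> t + 1 \<notin> {Suc a} \<and> t \<notin> {Suc a} \<and> t - 2 * card {i \<in> {Suc a}. i \<le> t} = j)
      = skip a j" if "j < n - 2"
    using that unfolding card_single_le skip_def by (intro the_equality) auto
  then show ?thesis
    unfolding cap_diag_def by auto
qed

lemma cup_single_Bot: "Suc a < n \<Longrightarrow> s < n - 2 \<Longrightarrow> cup_diag {Suc a} n (Bot s) = Top (skip a s)"
  by (simp add: cup_diag_def cap_single_Top)

lemma cup_single_Top:
  "t < n \<Longrightarrow> cup_diag {Suc a} n (Top t) =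
    (if t = a then Top (Suc a) else if t = Suc a then Top a else Bot (unskip a t))"
  by (simp add: cup_diag_def cap_single_Bot)

lemma compose_cupcap_cupcap:
  assumes I: "I \<in> apt n" and J: "J \<in> apt n"
  shows "compose n n n (cupcap_diag J n) (cupcap_diag I n) =
    (if I \<union> J \<in> apt n then Some (cupcap_diag (I \<union> J) n) else None)"
proof (cases "I \<union> J \<in> apt n")
  case True
  have Suc_notin: "Suc x \<notin> I" "Suc x \<notin> J" if "x \<in> I \<union> J" for x
    using apt_memD[OF True that] by simp_all
  have pos: "0 < x" and less: "x < n" if "x \<in> I \<union> J" for x
    using apt_memD[OF True that] by simp_all
  have pred_notin: "x - 1 \<notin> I" "x - 1 \<notin> J" if "x \<in> I \<union> J" for x
    using Suc_notin[of "x - 1"] pos[OF that] that by (auto simp: Suc_pred')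
  have pred_less: "x - 1 < n" if "x \<in> I \<union> J" for x
    using less[OF that] by simp
  have "\<not> zigzag n (cupcap_diag J n) (cupcap_diag I n)"
    using Suc_notin by (auto simp: zigzag_def cupcap_Bot cupcap_Top split: if_splits)
  moreover have "glue n n (cupcap_diag J n) (cupcap_diag I n) = cupcap_diag (I \<union> J) n"
    using Suc_notin pos less pred_notin pred_less
    by (intro ext) (auto simp: glue_def cupcap_Bot cupcap_Top Suc_pred' split: pt.splits if_splits)
  ultimately show ?thesis
    using True unfolding compose_eq by simp
next
  case False
  then obtain x where x: "x \<in> I \<union> J" "Suc x \<in> I \<union> J"
    using I J unfolding apt_def by auto
  then have "x < n"
    using apt_memD[OF I] apt_memD[OF J] by blast
  have "zigzag n (cupcap_diag J n) (cupcap_diag I n)"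
  proof (cases "x \<in> I")
    case True
    then have "Suc x \<in> J" "Suc x \<notin> I"
      using x apt_memD[OF I] by auto
    with True \<open>x < n\<close> show ?thesis
      unfolding zigzag_def by (intro exI[of _ x]) (auto simp: cupcap_Bot cupcap_Top)
  next
    case False
    then have "x \<in> J" "Suc x \<in> I" "Suc x \<notin> J"
      using x apt_memD[OF J] by auto
    with \<open>x < n\<close> show ?thesis
      unfolding zigzag_def using apt_memD[OF J \<open>x \<in> J\<close>]
      by (intro exI[of _ x]) (auto simp: cupcap_Bot cupcap_Top)
  qed
  with False show ?thesis
    unfolding compose_eq by simp
qed

lemma compose_cupcap_cup_single_None:
  assumes I: "I \<in> apt n" and "Suc a < n" and "a \<in> I \<or> Suc (Suc a) \<in> I"
  shows "compose (n - 2) n n (cupcap_diag I n) (cup_diag {Suc a} n) = None"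
proof -
  have "zigzag n (cupcap_diag I n) (cup_diag {Suc a} n)"
  proof (cases "a \<in> I")
    case True
    then have "Suc a \<notin> I"
      using apt_memD[OF I] by blast
    with True assms(2) show ?thesis
      unfolding zigzag_def by (intro exI[of _ a]) (auto simp: cup_single_Top cupcap_Bot)
  next
    case False
    with assms(2,3) show ?thesis
      unfolding zigzag_def by (intro exI[of _ "Suc a"]) (auto simp: cup_single_Top cupcap_Bot)
  qed
  then show ?thesis
    unfolding compose_eq by simp
qed

lemma compose_cupcap_insert_cup_single:
  assumes I: "I \<in> apt n" and a: "Suc a < n" and "a \<notin> I" "Suc a \<notin> I" "Suc (Suc a) \<notin> I"
  shows "compose (n - 2) n n (cupcap_diag (insert (Suc a) I) n) (cup_diag {Suc a} n)
       = compose (n - 2) n n (cupcap_diag I n) (cup_diag {Suc a} n)"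
proof -
  have "\<not> zigzag n (cupcap_diag J n) (cup_diag {Suc a} n)" if "a \<notin> J" "Suc (Suc a) \<notin> J" for J
    using that a by (auto simp: zigzag_def cup_single_Top cupcap_Bot split: if_splits)
  moreover have "glue (n - 2) n (cupcap_diag (insert (Suc a) I) n) (cup_diag {Suc a} n)
      = glue (n - 2) n (cupcap_diag I n) (cup_diag {Suc a} n)"
    using assms
    by (intro ext) (auto simp: glue_def cup_single_Bot cup_single_Top cupcap_Bot cupcap_Top skip_def unskip_def
        split: pt.splits if_splits)
  ultimately show ?thesis
    using assms unfolding compose_eq by simp
qed

lemma compose_cap_single_cupcap_None:
  assumes I: "I \<in> apt n" and "Suc a < n" and "a \<in> I \<or> Suc (Suc a) \<in> I"
  shows "compose n n (n - 2) (cap_diag {Suc a} n) (cupcap_diag I n) = None"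
proof -
  have "zigzag n (cap_diag {Suc a} n) (cupcap_diag I n)"
  proof (cases "a \<in> I")
    case True
    then have "Suc a \<notin> I"
      using apt_memD[OF I] by blast
    with True assms(2) show ?thesis
      unfolding zigzag_def by (intro exI[of _ a]) (auto simp: cap_single_Bot cupcap_Top)
  next
    case False
    with assms(2,3) show ?thesis
      unfolding zigzag_def by (intro exI[of _ "Suc a"]) (auto simp: cap_single_Bot cupcap_Top)
  qed
  then show ?thesis
    unfolding compose_eq by simp
qed

lemma compose_cap_single_cupcap_insert:
  assumes I: "I \<in> apt n" and a: "Suc a < n" and "a \<notin> I" "Suc a \<notin> I" "Suc (Suc a) \<notin> I"
  shows "compose n n (n - 2) (cap_diag {Suc a} n) (cupcap_diag (insert (Suc a) I) n)
       = compose n n (n - 2) (cap_diag {Suc a} n) (cupcap_diag I n)"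
proof -
  have "\<not> zigzag n (cap_diag {Suc a} n) (cupcap_diag J n)" if "a \<notin> J" "Suc (Suc a) \<notin> J" for J
    using that a by (auto simp: zigzag_def cap_single_Bot cupcap_Top split: if_splits)
  moreover have "glue n (n - 2) (cap_diag {Suc a} n) (cupcap_diag (insert (Suc a) I) n)
      = glue n (n - 2) (cap_diag {Suc a} n) (cupcap_diag I n)"
    using assms
    by (intro ext) (auto simp: glue_def cap_single_Bot cap_single_Top cupcap_Bot cupcap_Top skip_def unskip_def
        split: pt.splits if_splits)
  ultimately show ?thesis
    using assms unfolding compose_eq by simp
qed

section \<open>The properties of \<open>j\<^sub>n\<close>\<close>

lemma jn_eq_sum_cupcap: "(jn n :: 'k::field mor) = (\<lambda>e. \<Sum>I\<in>apt n. (-1) ^ card I * dg (cupcap_diag I n) e)"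
  unfolding jn_def
  by (intro ext sum.cong refl) (simp add: comp_dg_dg[OF cup_diag_tl cap_diag_tl] compose_cup_cap)

lemma jn_leading_term:
  "\<exists>x::'k::field mor. (\<forall>e. e \<notin> lower_diags n \<longrightarrow> x e = 0)
     \<and> (jn n :: 'k mor) = (\<lambda>e. dg (id_diag n) e + x e)"
proof (intro exI conjI allI impI)
  let ?x = "\<lambda>e. \<Sum>I\<in>apt n - {{}}. (-1) ^ card I * (dg (cupcap_diag I n) e :: 'k)"
  show "(jn n :: 'k mor) = (\<lambda>e. dg (id_diag n) e + ?x e)"
    unfolding jn_eq_sum_cupcap
    by (intro ext) (simp add: sum.remove[OF finite_apt empty_apt] cupcap_empty)
  fix e assume "e \<notin> lower_diags n"
  then show "?x e = 0"
    using cupcap_lower by (intro sum.neutral) (auto simp: dg_def)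
qed

lemma jn_comp_cup_single:
  assumes i: "i \<in> {1..n-1}"
  shows "comp (n - 2) n n (jn n :: 'k::field mor) (dg (cup_diag {i} n)) = (\<lambda>_. 0)"
proof
  fix e
  obtain a where i_eq: "i = Suc a" and a: "Suc a < n"
    using i by (cases i) auto
  let ?cup = "cup_diag {Suc a} n"
  let ?G = "\<lambda>I. comp (n - 2) n n (dg (cupcap_diag I n)) (dg ?cup) e :: 'k"
  have "comp (n - 2) n n (jn n :: 'k mor) (dg ?cup) e = (\<Sum>I\<in>apt n. (-1) ^ card I * ?G I)"
    unfolding jn_eq_sum_cupcap by (rule comp_sum_left[OF finite_apt])
  also have "\<dots> = 0"
  proof (rule sum_apt_toggle_eq_0)
    fix I assume I: "I \<in> apt n" and "Suc a \<notin> I"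
    then have neighbours: "insert (Suc a) I \<in> apt n \<longleftrightarrow> a \<notin> I \<and> Suc (Suc a) \<notin> I"
      using insert_apt_iff[OF I, of "Suc a"] a by simp
    have cup: "?cup \<in> tl_diag (n - 2) n"
      using cup_single_tl[OF i] i_eq by simp
    show "?G (insert (Suc a) I) = ?G I" if "insert (Suc a) I \<in> apt n"
      using that neighbours compose_cupcap_insert_cup_single[OF I a] \<open>Suc a \<notin> I\<close>
      by (simp add: comp_dg_dg[OF cupcap_diag_tl cup] comp_dg_dg[OF cupcap_diag_tl[OF I] cup])
    show "?G I = 0" if "insert (Suc a) I \<notin> apt n"
      using that neighbours compose_cupcap_cup_single_None[OF I a]
      by (simp add: comp_dg_dg[OF cupcap_diag_tl[OF I] cup])
  qed
  finally show "comp (n - 2) n n (jn n :: 'k mor) (dg (cup_diag {i} n)) e = 0"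
    unfolding i_eq .
qed

lemma cap_single_comp_jn:
  assumes i: "i \<in> {1..n-1}"
  shows "comp n n (n - 2) (dg (cap_diag {i} n)) (jn n :: 'k::field mor) = (\<lambda>_. 0)"
proof
  fix e
  obtain a where i_eq: "i = Suc a" and a: "Suc a < n"
    using i by (cases i) auto
  let ?cap = "cap_diag {Suc a} n"
  let ?G = "\<lambda>I. comp n n (n - 2) (dg ?cap) (dg (cupcap_diag I n)) e :: 'k"
  have "comp n n (n - 2) (dg ?cap) (jn n :: 'k mor) e = (\<Sum>I\<in>apt n. (-1) ^ card I * ?G I)"
    unfolding jn_eq_sum_cupcap by (rule comp_sum_right[OF finite_apt])
  also have "\<dots> = 0"
  proof (rule sum_apt_toggle_eq_0)
    fix I assume I: "I \<in> apt n" and "Suc a \<notin> I"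
    then have neighbours: "insert (Suc a) I \<in> apt n \<longleftrightarrow> a \<notin> I \<and> Suc (Suc a) \<notin> I"
      using insert_apt_iff[OF I, of "Suc a"] a by simp
    have cap: "?cap \<in> tl_diag n (n - 2)"
      using cap_single_tl[OF i] i_eq by simp
    show "?G (insert (Suc a) I) = ?G I" if "insert (Suc a) I \<in> apt n"
      using that neighbours compose_cap_single_cupcap_insert[OF I a] \<open>Suc a \<notin> I\<close>
      by (simp add: comp_dg_dg[OF cap cupcap_diag_tl] comp_dg_dg[OF cap cupcap_diag_tl[OF I]])
    show "?G I = 0" if "insert (Suc a) I \<notin> apt n"
      using that neighbours compose_cap_single_cupcap_None[OF I a]
      by (simp add: comp_dg_dg[OF cap cupcap_diag_tl[OF I]])
  qed
  finally show "comp n n (n - 2) (dg (cap_diag {i} n)) (jn n :: 'k mor) e = 0"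
    unfolding i_eq .
qed

lemma jn_idempotent: "comp n n n (jn n :: 'k::field mor) (jn n) = jn n"
proof
  fix e
  let ?H = "\<lambda>J I. if I \<union> J \<in> apt n then dg (cupcap_diag (I \<union> J) n) e else 0 :: 'k"
  have inner: "comp n n n (dg (cupcap_diag J n)) (jn n :: 'k mor) e = (\<Sum>I\<in>apt n. (-1) ^ card I * ?H J I)"
    if J: "J \<in> apt n" for J
    unfolding jn_eq_sum_cupcap comp_sum_right[OF finite_apt]
    by (intro sum.cong refl)
      (simp add: comp_dg_dg[OF cupcap_diag_tl[OF J] cupcap_diag_tl] compose_cupcap_cupcap[OF _ J])
  have vanish: "(\<Sum>I\<in>apt n. (-1) ^ card I * ?H J I) = 0" if "J \<in> apt n" "j \<in> J" for J j
  proof (rule sum_apt_toggle_eq_0)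
    fix I assume "I \<in> apt n" "j \<notin> I"
    show "?H J (insert j I) = ?H J I"
      using \<open>j \<in> J\<close> by (simp add: insert_absorb)
    show "?H J I = 0" if "insert j I \<notin> apt n"
      using that \<open>j \<in> J\<close> apt_subset[of "I \<union> J" n "insert j I"] by auto
  qed
  have rest: "(\<Sum>J\<in>apt n - {{}}. (-1) ^ card J * (\<Sum>I\<in>apt n. (-1) ^ card I * ?H J I)) = 0"
  proof (intro sum.neutral ballI)
    fix J assume "J \<in> apt n - {{}}"
    then obtain j where "J \<in> apt n" "j \<in> J"
      by blast
    then show "(-1) ^ card J * (\<Sum>I\<in>apt n. (-1) ^ card I * ?H J I) = 0"
      by (simp only: vanish[OF \<open>J \<in> apt n\<close> \<open>j \<in> J\<close>] mult_zero_right)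
  qed
  have "comp n n n (jn n :: 'k mor) (jn n) e
      = (\<Sum>J\<in>apt n. (-1) ^ card J * (\<Sum>I\<in>apt n. (-1) ^ card I * ?H J I))"
    by (subst (1) jn_eq_sum_cupcap, subst comp_sum_left[OF finite_apt]) (simp add: inner)
  also have "\<dots> = (-1) ^ card ({} :: nat set) * (\<Sum>I\<in>apt n. (-1) ^ card I * ?H {} I)
      + (\<Sum>J\<in>apt n - {{}}. (-1) ^ card J * (\<Sum>I\<in>apt n. (-1) ^ card I * ?H J I))"
    by (rule sum.remove[OF finite_apt empty_apt])
  also have "\<dots> = (\<Sum>I\<in>apt n. (-1) ^ card I * ?H {} I)"
    unfolding rest by simp
  also have "\<dots> = jn n e"
    unfolding jn_eq_sum_cupcap by simp
  finally show "comp n n n (jn n :: 'k mor) (jn n) e = jn n e" .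
qed

section \<open>Uniqueness\<close>

lemma tl_diag_nested:
  assumes d: "d \<in> tl_diag m n" and cap: "d (Bot i) = Bot j" "i < j" "j < m"
    and inside: "i < i'" "i' < j"
  obtains k where "d (Bot i') = Bot k" "i < k" "k < j"
proof -
  have i': "Bot i' \<in> pts m n" and i: "Bot i \<in> pts m n"
    using inside cap by simp_all
  have "d (Bot i') \<in> pts m n" "d (Bot i') \<noteq> Bot i'"
    using tl_diag_closed[OF d i'] tl_diag_no_fixpoint[OF d i'] .
  moreover have "d (Bot i') \<noteq> Bot i" "d (Bot i') \<noteq> Bot j"
    using cap inside tl_diag_involution[OF d] by (metis pt.inject(1) less_irrefl)+
  moreover have "\<not> j < cpos m n (d (Bot i'))"
    using tl_diag_noncrossing[OF d i i'] cap inside by auto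
  moreover have "\<not> (d (Bot i') = Bot k \<and> k < i)" for k
  proof
    assume "d (Bot i') = Bot k \<and> k < i"
    then show False
      using tl_diag_noncrossing[OF d, of "Bot k" "Bot i"] tl_diag_involution[OF d, of "Bot i'"] cap inside
      by auto
  qed
  ultimately show ?thesis
    using that cap by (cases "d (Bot i')") (auto simp: nat_neq_iff)
qed

lemma tl_diag_adjacent_cap:
  assumes d: "d \<in> tl_diag n n" and "through n d < n"
  obtains a where "Suc a < n" "d (Bot a) = Bot (Suc a)"
proof -
  let ?cap = "\<lambda>(i, j). i < j \<and> j < n \<and> d (Bot i) = Bot j"
  have "\<not> (\<forall>i<n. is_Top (d (Bot i)))"
  proof
    assume "\<forall>i<n. is_Top (d (Bot i))"
    then have "{i. i < n \<and> is_Top (d (Bot i))} = {..<n}"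
      by auto
    then show False
      using \<open>through n d < n\<close> unfolding through_is_Top by simp
  qed
  then obtain i where i: "i < n" "\<not> is_Top (d (Bot i))"
    by blast
  then obtain j where j: "d (Bot i) = Bot j"
    by (cases "d (Bot i)") auto
  have "j < n" "j \<noteq> i" "d (Bot j) = Bot i"
    using tl_diag_closed[OF d, of "Bot i"] tl_diag_no_fixpoint[OF d, of "Bot i"]
      tl_diag_involution[OF d, of "Bot i"] i j by simp_all
  then have "?cap (min i j, max i j)"
    using i j by (auto simp: min_def max_def)
  then obtain i j where ij: "?cap (i, j)" and narrowest: "\<And>i' j'. ?cap (i', j') \<Longrightarrow> j - i \<le> j' - i'"
    using ex_has_least_nat[of ?cap _ "\<lambda>(i, j). j - i"] by fastforce
  have "j = Suc i"
  proof (rule ccontr)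
    assume "j \<noteq> Suc i"
    then have "Suc i < j"
      using ij by simp
    then obtain k where k: "d (Bot (Suc i)) = Bot k" "i < k" "k < j"
      using tl_diag_nested[OF d] ij by blast
    moreover have "k \<noteq> Suc i"
      using tl_diag_no_fixpoint[OF d, of "Bot (Suc i)"] k ij by auto
    ultimately have "?cap (Suc i, k)"
      using ij by simp
    then show False
      using narrowest[of "Suc i" k] \<open>k < j\<close> \<open>k \<noteq> Suc i\<close> \<open>i < k\<close> by simp
  qed
  then show ?thesis
    using that ij by blast
qed

lemma not_zigzag_cup_single:
  assumes d: "d \<in> tl_diag n n" and a: "Suc a < n" and cap: "d (Bot a) = Bot (Suc a)"
  shows "\<not> zigzag n d (cup_diag {Suc a} n)"
proof -
  have "d (Bot (Suc a)) = Bot a"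
    using tl_diag_involution[OF d, of "Bot a"] cap by simp
  then show ?thesis
    using cap a by (auto simp: zigzag_def cup_single_Top split: if_splits)
qed

definition skip_pt :: "nat \<Rightarrow> pt \<Rightarrow> pt" where
  "skip_pt a x = (case x of Bot s \<Rightarrow> Bot (skip a s) | Top j \<Rightarrow> Top j)"

definition unskip_pt :: "nat \<Rightarrow> pt \<Rightarrow> pt" where
  "unskip_pt a x = (case x of Bot t \<Rightarrow> Bot (unskip a t) | Top j \<Rightarrow> Top j)"

lemma glue_cup_single_recover:
  assumes d: "d \<in> tl_diag n n" and a: "Suc a < n" and cap: "d (Bot a) = Bot (Suc a)"
    and x: "x \<in> pts n n" "x \<noteq> Bot a" "x \<noteq> Bot (Suc a)"
  shows "d x = skip_pt a (glue (n - 2) n d (cup_diag {Suc a} n) (unskip_pt a x))"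
proof -
  have cap': "d (Bot (Suc a)) = Bot a"
    using tl_diag_involution[OF d, of "Bot a"] cap by simp
  have not_cap: "b \<noteq> a" "b \<noteq> Suc a" if "d x = Bot b" for b
    using that x cap cap' tl_diag_involution[OF d, of x] by auto
  have "b < n" if "d x = Bot b" for b
    using that tl_diag_closed[OF d x(1)] by simp
  with not_cap have cup_Top: "cup_diag {Suc a} n (Top b) = Bot (unskip a b)" if "d x = Bot b" for b
    using that by (simp add: cup_single_Top)
  show ?thesis
  proof (cases x)
    case (Bot t)
    then have "t < n" "t \<noteq> a" "t \<noteq> Suc a"
      using x by auto
    then have "cup_diag {Suc a} n (Bot (unskip a t)) = Top t" "unskip a t < n - 2"
      using a by (simp_all add: cup_single_Bot unskip_less skip_unskip)
    then show ?thesis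
      using Bot cup_Top not_cap
      by (cases "d x") (simp_all add: glue_def skip_pt_def unskip_pt_def skip_unskip)
  next
    case (Top j)
    then show ?thesis
      using x cup_Top not_cap
      by (cases "d x") (simp_all add: glue_def skip_pt_def unskip_pt_def skip_unskip)
  qed
qed

lemma glue_cup_single_inj:
  assumes d: "d \<in> tl_diag n n" "d (Bot a) = Bot (Suc a)"
    and d': "d' \<in> tl_diag n n" "d' (Bot a) = Bot (Suc a)"
    and a: "Suc a < n"
    and eq: "glue (n - 2) n d (cup_diag {Suc a} n) = glue (n - 2) n d' (cup_diag {Suc a} n)"
  shows "d = d'"
proof
  fix x
  consider "x \<notin> pts n n" | "x = Bot a" | "x = Bot (Suc a)" | "x \<in> pts n n" "x \<noteq> Bot a" "x \<noteq> Bot (Suc a)"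
    by blast
  then show "d x = d' x"
  proof cases
    case 3
    then show ?thesis
      using d d' tl_diag_involution[of d n n "Bot a"] tl_diag_involution[of d' n n "Bot a"] by simp
  next
    case 4
    then show ?thesis
      using glue_cup_single_recover[OF d(1) a d(2)] glue_cup_single_recover[OF d'(1) a d'(2)] eq by simp
  qed (use d d' tl_diag_outside[OF d(1)] tl_diag_outside[OF d'(1)] in auto)
qed

lemma through_glue_cup_single:
  assumes a: "Suc a < n"
  shows "through (n - 2) (glue (n - 2) n d (cup_diag {Suc a} n))
    = card ({i. i < n \<and> is_Top (d (Bot i))} - {a, Suc a})"
proof -
  let ?S = "{s. s < n - 2 \<and> is_Top (d (Bot (skip a s)))}"
  have "is_Top (glue (n - 2) n d (cup_diag {Suc a} n) (Bot s)) \<longleftrightarrow> is_Top (d (Bot (skip a s)))"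
    if "s < n - 2" for s
    using that a by (auto simp: glue_def cup_single_Bot split: pt.splits)
  then have "through (n - 2) (glue (n - 2) n d (cup_diag {Suc a} n)) = card ?S"
    unfolding through_is_Top by (metis (lifting))
  also have "\<dots> = card (skip a ` ?S)"
    by (rule card_image[symmetric]) (metis inj_on_inverseI unskip_skip)
  also have "skip a ` ?S = {i. i < n \<and> is_Top (d (Bot i))} - {a, Suc a}"
  proof (intro equalityI subsetI)
    fix i assume "i \<in> {i. i < n \<and> is_Top (d (Bot i))} - {a, Suc a}"
    then have "unskip a i \<in> ?S" "i = skip a (unskip a i)"
      using a by (auto simp: unskip_less skip_unskip)
    then show "i \<in> skip a ` ?S"
      by blast
  qed (auto simp: skip_less skip_neq)
  finally show ?thesis .
qed

lemma through_eq_if_same_comp_cup_single: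
  assumes d: "d \<in> tl_diag n n" and a: "Suc a < n" and cap: "d (Bot a) = Bot (Suc a)"
    and d': "d' \<in> tl_diag n n" "d' \<noteq> d"
    and eq: "compose (n - 2) n n d' (cup_diag {Suc a} n) = compose (n - 2) n n d (cup_diag {Suc a} n)"
  shows "through n d' = through n d + 2"
proof -
  let ?cup = "cup_diag {Suc a} n"
  let ?T = "\<lambda>d. {i. i < n \<and> is_Top (d (Bot i))}"
  have not_zigzag: "\<not> zigzag n d' ?cup"
    and same_glue: "glue (n - 2) n d' ?cup = glue (n - 2) n d ?cup"
    using eq not_zigzag_cup_single[OF d a cap] unfolding compose_eq by (auto split: if_splits)
  have cup_Top: "a < n" "?cup (Top a) = Top (Suc a)" "?cup (Top (Suc a)) = Top a"
    using a by (simp_all add: cup_single_Top)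
  have cap_a: "c = Suc a" if "d' (Bot a) = Bot c" for c
    using that a cup_Top not_zigzag unfolding zigzag_def by blast
  have cap_Suc_a: "c = a" if "d' (Bot (Suc a)) = Bot c" for c
    using that a cup_Top not_zigzag unfolding zigzag_def by blast
  have "d' (Bot a) \<noteq> Bot (Suc a)"
  proof
    assume "d' (Bot a) = Bot (Suc a)"
    then have "d = d'"
      using glue_cup_single_inj[OF d cap d'(1) _ a] same_glue by simp
    with d'(2) show False
      by simp
  qed
  then have "is_Top (d' (Bot a))"
    using cap_a by (cases "d' (Bot a)") auto
  moreover have "is_Top (d' (Bot (Suc a)))"
  proof (cases "d' (Bot (Suc a))")
    case (Bot c')
    then have "d' (Bot a) = Bot (Suc a)"
      using cap_Suc_a tl_diag_involution[OF d'(1), of "Bot (Suc a)"] by simp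
    with \<open>is_Top (d' (Bot a))\<close> show ?thesis
      by simp
  qed simp
  ultimately have "{a, Suc a} \<subseteq> ?T d'"
    using a by simp
  then have "card (?T d') = card (?T d' - {a, Suc a}) + 2"
    using card_Diff_subset[of "{a, Suc a}" "?T d'"] card_mono[of "?T d'" "{a, Suc a}"] by simp
  then have "through n d' = card (?T d' - {a, Suc a}) + 2"
    unfolding through_is_Top .
  also have "card (?T d' - {a, Suc a}) = card (?T d - {a, Suc a})"
    using through_glue_cup_single[OF a, of d'] through_glue_cup_single[OF a, of d] same_glue by simp
  also have "?T d - {a, Suc a} = ?T d"
    using cap tl_diag_involution[OF d, of "Bot a"] by auto
  finally show ?thesis
    unfolding through_is_Top .
qed

lemma eq_0_if_lower_and_comp_cup_eq_0:
  fixes r :: "'k::field mor"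
  assumes lower: "\<And>e. e \<notin> lower_diags n \<Longrightarrow> r e = 0"
    and killed: "\<And>i. i \<in> {1..n-1} \<Longrightarrow> comp (n - 2) n n r (dg (cup_diag {i} n)) = (\<lambda>_. 0)"
  shows "r = (\<lambda>_. 0)"
proof (rule ccontr)
  let ?S = "{d \<in> tl_diag n n. r d \<noteq> 0}"
  assume "r \<noteq> (\<lambda>_. 0)"
  then obtain e where "r e \<noteq> 0"
    by auto
  have S_lower: "?S \<subseteq> lower_diags n"
    using lower by blast
  with \<open>r e \<noteq> 0\<close> have "e \<in> ?S"
    using lower unfolding lower_diags_def by blast
  moreover have "\<forall>d. d \<in> ?S \<longrightarrow> through n d < Suc n"
    using S_lower unfolding lower_diags_def by auto
  ultimately obtain d where "d \<in> ?S" and maximal: "\<And>d'. d' \<in> ?S \<Longrightarrow> through n d' \<le> through n d"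
    using Lattices_Big.ex_has_greatest_nat[of "\<lambda>d. d \<in> ?S" e "through n"] by blast
  then have d: "d \<in> tl_diag n n" "through n d < n" "r d \<noteq> 0"
    using S_lower unfolding lower_diags_def by auto
  obtain a where a: "Suc a < n" and cap: "d (Bot a) = Bot (Suc a)"
    using tl_diag_adjacent_cap[OF d(1,2)] by blast
  let ?cup = "cup_diag {Suc a} n"
  have cup: "?cup \<in> tl_diag (n - 2) n"
    using cup_single_tl[of "Suc a" n] a by simp
  obtain f where f: "compose (n - 2) n n d ?cup = Some f"
    unfolding compose_eq using not_zigzag_cup_single[OF d(1) a cap] by simp
  have "Suc a \<in> {1..n-1}"
    using a by simp
  then have "0 = comp (n - 2) n n r (dg ?cup) f"
    using fun_cong[OF killed, of "Suc a" f] by simp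
  also have "\<dots> = (\<Sum>d'\<in>tl_diag n n. if compose (n - 2) n n d' ?cup = Some f then r d' else 0)"
    by (rule comp_dg_right[OF cup])
  also have "\<dots> = (\<Sum>d'\<in>{d}. if compose (n - 2) n n d' ?cup = Some f then r d' else 0)"
  proof (rule sum.mono_neutral_right[OF finite_tl_diag], use d(1) in simp, rule ballI)
    fix d' assume d': "d' \<in> tl_diag n n - {d}"
    show "(if compose (n - 2) n n d' ?cup = Some f then r d' else 0) = 0"
    proof (rule ccontr)
      assume "(if compose (n - 2) n n d' ?cup = Some f then r d' else 0) \<noteq> 0"
      then have "compose (n - 2) n n d' ?cup = compose (n - 2) n n d ?cup" "d' \<in> ?S"
        using f d' by (auto split: if_splits)
      then show False
        using through_eq_if_same_comp_cup_single[OF d(1) a cap, of d'] maximal[of d'] d' by simp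
    qed
  qed
  also have "\<dots> = r d"
    using f by simp
  finally show False
    using d(3) by simp
qed

theorem mainTheorem8:
  fixes n :: nat
  shows "JW_props n (jn n :: 'k::field mor) \<and>
         (\<forall>p :: 'k mor. JW_props n p \<longrightarrow> p = jn n)"
proof (intro conjI allI impI)
  show "JW_props n (jn n :: 'k mor)"
    using jn_leading_term jn_idempotent cap_single_comp_jn jn_comp_cup_single
    unfolding JW_props_def lower_diags_def by blast
  fix p :: "'k mor"
  assume "JW_props n p"
  then obtain x where x: "\<And>e. e \<notin> lower_diags n \<Longrightarrow> x e = 0" "p = (\<lambda>e. dg (id_diag n) e + x e)"
    and p_cup: "\<And>i. i \<in> {1..n-1} \<Longrightarrow> comp (n - 2) n n p (dg (cup_diag {i} n)) = (\<lambda>_. 0)"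
    unfolding JW_props_def lower_diags_def by blast
  obtain y :: "'k mor" where y: "\<And>e. e \<notin> lower_diags n \<Longrightarrow> y e = 0" "jn n = (\<lambda>e. dg (id_diag n) e + y e)"
    using jn_leading_term by blast
  have "(\<lambda>e. p e - jn n e) = (\<lambda>_. 0)"
  proof (rule eq_0_if_lower_and_comp_cup_eq_0)
    show "p e - jn n e = 0" if "e \<notin> lower_diags n" for e
      using x y that by simp
    show "comp (n - 2) n n (\<lambda>e. p e - jn n e) (dg (cup_diag {i} n)) = (\<lambda>_. 0)" if "i \<in> {1..n-1}" for i
      using p_cup[OF that] jn_comp_cup_single[OF that] by (simp add: comp_diff_left fun_eq_iff)
  qed
  then show "p = jn n"
    by (simp add: fun_eq_iff)
qed

end
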